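(* Let $G$ be a finite non-abelian group satisfying condition (Con). Then the clique number of $\mathcal C_G$ is $\omega(\mathcal C_G)=\max_{u\in G\setminus Z(G)}|C(u)|$. Moreover, with $C(G)=\{v\in G: d(v)-|Z(G)|>0\}$ where $d(v)=|C(v)|-1$ is the degree of $v$ in $\mathcal C_G$: (i) if $C(G)\supsetneq Z(G)$, then $\omega(\mathcal C_G)$ equals the largest eigenvalue of the Laplacian matrix of $\mathcal C_G$ that is strictly smaller than $|G|$ (the second largest distinct eigenvalue); (ii) if $C(G)=Z(G)$, then $\omega(\mathcal C_G)=|Z(G)|+1$.
   Context: For a finite group $G$, the commuting graph $\mathcal C_G$ is the simple undirected graph with vertex set $G$ in which distinct $u,v\in G$ are adjacent iff $uv=vu$. The Laplacian matrix of a simple graph is $L=D-A$ ($A$ adjacency matrix, $D$ diagonal degree matrix). $Z(G)$ is the center of $G$ and $C(v)=\{w\in G: wv=vw\}$ the centralizer of $v$. Condition (Con): for all $u,v\in G\setminus Z(G)$, either $C(u)=C(v)$ or $C(u)\cap C(v)=Z(G)$. The clique number is the maximum size of a set of pairwise adjacent vertices. *)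

theory Defs
  imports "HOL-Algebra.Group" "HOL-Analysis.Analysis"
begin

definition centr :: "('a, 'b) monoid_scheme \<Rightarrow> 'a \<Rightarrow> 'a set" where
  "centr G v = {w \<in> carrier G. w \<otimes>\<^bsub>G\<^esub> v = v \<otimes>\<^bsub>G\<^esub> w}"

definition grp_center :: "('a, 'b) monoid_scheme \<Rightarrow> 'a set" where
  "grp_center G = {z \<in> carrier G. \<forall>w \<in> carrier G. z \<otimes>\<^bsub>G\<^esub> w = w \<otimes>\<^bsub>G\<^esub> z}"

definition con_condition :: "('a, 'b) monoid_scheme \<Rightarrow> bool" where
  "con_condition G \<longleftrightarrow> (\<forall>u \<in> carrier G - grp_center G. \<forall>v \<in> carrier G - grp_center G.
      centr G u = centr G v \<or> centr G u \<inter> centr G v = grp_center G)"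

definition comm_adj :: "('a, 'b) monoid_scheme \<Rightarrow> 'a \<Rightarrow> 'a \<Rightarrow> bool" where
  "comm_adj G u v \<longleftrightarrow> u \<in> carrier G \<and> v \<in> carrier G \<and> u \<noteq> v \<and> u \<otimes>\<^bsub>G\<^esub> v = v \<otimes>\<^bsub>G\<^esub> u"

definition comm_degree :: "('a, 'b) monoid_scheme \<Rightarrow> 'a \<Rightarrow> nat" where
  "comm_degree G u = card {v. comm_adj G u v}"

definition is_clique :: "('a, 'b) monoid_scheme \<Rightarrow> 'a set \<Rightarrow> bool" where
  "is_clique G S \<longleftrightarrow> S \<subseteq> carrier G \<and> (\<forall>u \<in> S. \<forall>v \<in> S. u \<noteq> v \<longrightarrow> comm_adj G u v)"

definition clique_number :: "('a, 'b) monoid_scheme \<Rightarrow> nat" where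
  "clique_number G = Max {card S | S. is_clique G S}"

definition comm_laplacian :: "('a, 'b) monoid_scheme \<Rightarrow> 'a \<Rightarrow> 'a \<Rightarrow> real" where
  "comm_laplacian G u v = (if u = v then real (comm_degree G u) else if comm_adj G u v then -1 else 0)"

definition lap_eigenvalue :: "('a, 'b) monoid_scheme \<Rightarrow> real \<Rightarrow> bool" where
  "lap_eigenvalue G mu \<longleftrightarrow> (\<exists>f :: 'a \<Rightarrow> real. (\<exists>u \<in> carrier G. f u \<noteq> 0) \<and>
      (\<forall>u \<in> carrier G. (\<Sum>v \<in> carrier G. comm_laplacian G u v * f v) = mu * f u))"

text \<open>The set C(G) = {v. d(v) - |Z(G)| > 0}, with d(v) = |C(v)| - 1.\<close>
definition CG_set :: "('a, 'b) monoid_scheme \<Rightarrow> 'a set" where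
  "CG_set G = {v \<in> carrier G. (int (card (centr G v)) - 1) - int (card (grp_center G)) > 0}"

end

theory Submission
  imports Defs
begin

text \<open>Under (Con) the centralizers of non-central elements partition G - Z(G) into classes
  C(u) - Z(G), each C(u) is abelian, and any clique containing a non-central u lies in C(u);
  hence the clique number is the largest such |C(u)|. The Laplacian acts by
  (L f)(u) = |C(u)| f(u) - (sum of f over C(u)), so an eigenfunction for an eigenvalue
  \<mu> different from |G|, |Z(G)| and all |C(u)| is constant on Z(G) and on each class, which forces
  \<mu> = 0. Conversely the difference of the indicators of two non-central elements of one class
  is an eigenfunction for |C(u)|.\<close>

lemma centr_subset_carrier: "centr G u \<subseteq> carrier G"
  unfolding centr_def by auto

lemma grp_center_subset_carrier: "grp_center G \<subseteq> carrier G"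
  unfolding grp_center_def by auto

lemma grp_center_subset_centr: "u \<in> carrier G \<Longrightarrow> grp_center G \<subseteq> centr G u"
  unfolding grp_center_def centr_def by auto

lemma self_in_centr: "u \<in> carrier G \<Longrightarrow> u \<in> centr G u"
  unfolding centr_def by auto

lemma centr_of_central: "u \<in> grp_center G \<Longrightarrow> centr G u = carrier G"
  unfolding centr_def grp_center_def by auto

lemma finite_centr: "finite (carrier G) \<Longrightarrow> finite (centr G u)"
  using centr_subset_carrier finite_subset by metis

lemma centr_psubset_carrier:
  assumes "u \<in> carrier G - grp_center G"
  shows "centr G u \<subset> carrier G"
proof -
  obtain w where "w \<in> carrier G" "w \<otimes>\<^bsub>G\<^esub> u \<noteq> u \<otimes>\<^bsub>G\<^esub> w"
    using assms unfolding grp_center_def by auto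
  then show ?thesis using centr_subset_carrier[of G u] unfolding centr_def by auto
qed

lemma card_centr_noncentral_ge:
  assumes "finite (carrier G)" and "u \<in> carrier G - grp_center G"
  shows "card (grp_center G) + 1 \<le> card (centr G u)"
proof -
  have "insert u (grp_center G) \<subseteq> centr G u"
    using assms grp_center_subset_centr self_in_centr by fastforce
  then have "card (insert u (grp_center G)) \<le> card (centr G u)"
    using assms(1) finite_centr card_mono by metis
  moreover have "finite (grp_center G)"
    using assms(1) grp_center_subset_carrier finite_subset by metis
  ultimately show ?thesis using assms(2) by simp
qed

lemma noncentral_exists:
  assumes "group G" and "\<not> comm_group G"
  shows "carrier G - grp_center G \<noteq> {}"
proof -
  obtain x y where "x \<in> carrier G" "y \<in> carrier G" "x \<otimes>\<^bsub>G\<^esub> y \<noteq> y \<otimes>\<^bsub>G\<^esub> x"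
    using assms group.group_comm_groupI by metis
  then show ?thesis unfolding grp_center_def by blast
qed

lemma CG_set_iff:
  "v \<in> CG_set G \<longleftrightarrow> v \<in> carrier G \<and> card (grp_center G) + 2 \<le> card (centr G v)"
  unfolding CG_set_def by auto

lemma con_centr_eq:
  assumes "con_condition G" "u \<in> carrier G - grp_center G" "v \<in> carrier G - grp_center G"
    and "v \<in> centr G u"
  shows "centr G v = centr G u"
proof -
  have "u \<in> centr G v \<inter> centr G u"
    using assms(2-4) self_in_centr unfolding centr_def by auto
  then have "centr G u \<inter> centr G v \<noteq> grp_center G" using assms(2) by auto
  then show ?thesis using assms(1-3) unfolding con_condition_def by metis
qed

lemma con_centr_commute:
  assumes "con_condition G" and "u \<in> carrier G - grp_center G"
    and x: "x \<in> centr G u" and y: "y \<in> centr G u"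
  shows "x \<otimes>\<^bsub>G\<^esub> y = y \<otimes>\<^bsub>G\<^esub> x"
proof (cases "x \<in> grp_center G \<or> y \<in> grp_center G")
  case True
  moreover have "x \<in> carrier G" "y \<in> carrier G" using x y centr_subset_carrier[of G u] by auto
  ultimately show ?thesis unfolding grp_center_def by auto
next
  case False
  then have "centr G y = centr G u"
    using con_centr_eq[OF assms(1,2)] y centr_subset_carrier[of G u] by auto
  with x show ?thesis unfolding centr_def by auto
qed

lemma con_is_clique_centr:
  assumes "con_condition G" and "u \<in> carrier G - grp_center G"
  shows "is_clique G (centr G u)"
  using con_centr_commute[OF assms] centr_subset_carrier[of G u]
  unfolding is_clique_def comm_adj_def by blast

lemma clique_subset_centr:
  assumes "is_clique G S" and "u \<in> S"
  shows "S \<subseteq> centr G u"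
  using assms unfolding is_clique_def comm_adj_def centr_def by auto

lemma clique_number_eq_Max_card_centr:
  assumes fin: "finite (carrier G)" and con: "con_condition G"
    and noncentral: "carrier G - grp_center G \<noteq> {}"
  shows "clique_number G = Max ((\<lambda>u. card (centr G u)) ` (carrier G - grp_center G))"
    (is "_ = Max (?c ` ?D)")
  unfolding clique_number_def
proof (rule Max_eqI)
  have "{card S |S. is_clique G S} \<subseteq> card ` Pow (carrier G)"
    unfolding is_clique_def by auto
  then show "finite {card S |S. is_clique G S}" using fin finite_subset by blast
next
  have finD: "finite (?c ` ?D)" using fin by simp
  fix y assume "y \<in> {card S |S. is_clique G S}"
  then obtain S where cl: "is_clique G S" and y: "y = card S" by auto
  show "y \<le> Max (?c ` ?D)"
  proof (cases "S \<subseteq> grp_center G")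
    case True
    obtain u where u: "u \<in> ?D" using noncentral by auto
    have "card S \<le> card (grp_center G)"
      using True fin grp_center_subset_carrier card_mono finite_subset by metis
    also have "\<dots> \<le> ?c u" using card_centr_noncentral_ge[OF fin u] by simp
    also have "\<dots> \<le> Max (?c ` ?D)" using u finD by simp
    finally show ?thesis using y by simp
  next
    case False
    then obtain u where "u \<in> S" and u: "u \<in> ?D"
      using cl unfolding is_clique_def by auto
    then have "card S \<le> ?c u"
      using clique_subset_centr[OF cl] finite_centr[OF fin] card_mono by metis
    also have "\<dots> \<le> Max (?c ` ?D)" using u finD by simp
    finally show ?thesis using y by simp
  qed
next
  have "Max (?c ` ?D) \<in> ?c ` ?D" using fin noncentral by (intro Max_in) auto
  then obtain u where "u \<in> ?D" "?c u = Max (?c ` ?D)" by auto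
  then show "Max (?c ` ?D) \<in> {card S |S. is_clique G S}"
    using con_is_clique_centr[OF con] by force
qed

lemma comm_adj_iff_centr:
  assumes "u \<in> carrier G"
  shows "comm_adj G u v \<longleftrightarrow> v \<in> centr G u - {u}"
  using assms unfolding comm_adj_def centr_def by auto

lemma comm_laplacian_apply:
  assumes fin: "finite (carrier G)" and u: "u \<in> carrier G"
  shows "(\<Sum>v \<in> carrier G. comm_laplacian G u v * f v)
     = real (card (centr G u)) * f u - sum f (centr G u)"
proof -
  let ?C = "centr G u"
  have uC: "u \<in> ?C" using self_in_centr[OF u] .
  have finC: "finite ?C" using finite_centr[OF fin] .
  have "{v. comm_adj G u v} = ?C - {u}" using comm_adj_iff_centr[OF u] by blast
  then have "comm_degree G u = card ?C - 1"
    unfolding comm_degree_def using card_Diff_singleton[OF uC] by simp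
  moreover have "card ?C \<ge> 1" using finC uC by (metis One_nat_def Suc_leI card_gt_0_iff empty_iff)
  ultimately have deg: "real (comm_degree G u) = real (card ?C) - 1" by (simp add: of_nat_diff)
  have "(\<Sum>v \<in> carrier G. comm_laplacian G u v * f v) =
     (\<Sum>v \<in> carrier G. if v = u then real (comm_degree G u) * f u else 0)
     - (\<Sum>v \<in> carrier G. if v \<in> ?C - {u} then f v else 0)"
    unfolding sum_subtractf[symmetric]
    by (rule sum.cong) (auto simp: comm_laplacian_def comm_adj_iff_centr[OF u])
  also have "\<dots> = real (comm_degree G u) * f u - sum f (carrier G \<inter> (?C - {u}))"
    using fin u by (simp add: sum.inter_restrict)
  also have "carrier G \<inter> (?C - {u}) = ?C - {u}" using centr_subset_carrier[of G u] by blast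
  also have "sum f (?C - {u}) = sum f ?C - f u"
    using finC uC by (simp add: sum_diff1)
  finally show ?thesis using deg by (simp add: algebra_simps)
qed

lemma lap_eigenvalue_iff:
  assumes "finite (carrier G)"
  shows "lap_eigenvalue G mu \<longleftrightarrow> (\<exists>f. (\<exists>u \<in> carrier G. f u \<noteq> 0) \<and>
    (\<forall>u \<in> carrier G. real (card (centr G u)) * f u - sum f (centr G u) = mu * f u))"
  unfolding lap_eigenvalue_def using comm_laplacian_apply[OF assms] by simp

lemma eigenfunction_on_center:
  assumes eig: "\<forall>u \<in> carrier G. real (card (centr G u)) * f u - sum f (centr G u) = mu * f u"
    and mu: "mu \<noteq> real (card (carrier G))" and z: "z \<in> grp_center G"
  shows "f z = sum f (carrier G) / (real (card (carrier G)) - mu)"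
proof -
  have "real (card (carrier G)) * f z - sum f (carrier G) = mu * f z"
    using eig z grp_center_subset_carrier centr_of_central[OF z] by fastforce
  with mu show ?thesis by (simp add: field_simps)
qed

lemma eigenfunction_on_noncentral:
  assumes fin: "finite (carrier G)" and con: "con_condition G"
    and eig: "\<forall>u \<in> carrier G. real (card (centr G u)) * f u - sum f (centr G u) = mu * f u"
    and u: "u \<in> carrier G - grp_center G"
    and mu_centr: "mu \<noteq> real (card (centr G u))" and mu_center: "mu \<noteq> real (card (grp_center G))"
    and const: "\<forall>z \<in> grp_center G. f z = c"
  shows "f u = real (card (grp_center G)) * c / (real (card (grp_center G)) - mu)"
proof -
  let ?Z = "grp_center G" and ?C = "centr G u"
  let ?s = "real (card ?C)" and ?z = "real (card ?Z)"
  have uc: "u \<in> carrier G" using u by simp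
  have ZC: "?Z \<subseteq> ?C" using grp_center_subset_centr[OF uc] .
  have finC: "finite ?C" using finite_centr[OF fin] .
  have class_const: "f v = f u" if v: "v \<in> ?C - ?Z" for v
  proof -
    have vc: "v \<in> carrier G" using v centr_subset_carrier[of G u] by auto
    have "centr G v = ?C" using con_centr_eq[OF con u] v vc by auto
    then have "?s * f v - sum f ?C = mu * f v" using eig vc by force
    moreover have "?s * f u - sum f ?C = mu * f u" using eig uc by blast
    ultimately have "(?s - mu) * (f v - f u) = 0" by (simp add: algebra_simps)
    with mu_centr show ?thesis by simp
  qed
  have "sum f ?C = sum f ?Z + sum f (?C - ?Z)"
    using finC ZC by (metis add.commute sum.subset_diff)
  also have "sum f ?Z = ?z * c" using const by simp
  also have "sum f (?C - ?Z) = (?s - ?z) * f u"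
    using class_const ZC finC by (simp add: card_Diff_subset of_nat_diff card_mono finite_subset)
  finally have "sum f ?C = ?z * c + (?s - ?z) * f u" .
  with eig uc have "(?z - mu) * f u = ?z * c" by (simp add: algebra_simps)
  with mu_center show ?thesis by (simp add: field_simps)
qed

lemma lap_eigenvalue_below_order_cases:
  assumes fin: "finite (carrier G)" and con: "con_condition G"
    and eig: "lap_eigenvalue G mu" and lt: "mu < real (card (carrier G))"
  shows "mu = 0 \<or> mu = real (card (grp_center G)) \<or>
         (\<exists>u \<in> carrier G - grp_center G. mu = real (card (centr G u)))"
proof (rule ccontr)
  assume "\<not> ?thesis"
  then have mu0: "mu \<noteq> 0" and muZ: "mu \<noteq> real (card (grp_center G))"
    and muC: "\<And>u. u \<in> carrier G - grp_center G \<Longrightarrow> mu \<noteq> real (card (centr G u))"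
    by auto
  let ?Z = "grp_center G" and ?D = "carrier G - grp_center G"
  let ?N = "real (card (carrier G))" and ?z = "real (card (grp_center G))"
  obtain f where nonzero: "\<exists>u \<in> carrier G. f u \<noteq> 0" and
    eqs: "\<forall>u \<in> carrier G. real (card (centr G u)) * f u - sum f (centr G u) = mu * f u"
    using eig lap_eigenvalue_iff[OF fin] by blast
  define S where "S = sum f (carrier G)"
  define c where "c = S / (?N - mu)"
  define a where "a = ?z * c / (?z - mu)"
  have fZ: "\<forall>z \<in> ?Z. f z = c"
    using eigenfunction_on_center[OF eqs less_imp_neq[OF lt]] unfolding c_def S_def by blast
  have fD: "f u = a" if "u \<in> ?D" for u
    using eigenfunction_on_noncentral[OF fin con eqs that muC[OF that] muZ fZ] unfolding a_def .
  have finZ: "finite ?Z" using fin grp_center_subset_carrier finite_subset by metis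
  have "S = sum f ?Z + sum f ?D"
    unfolding S_def using fin grp_center_subset_carrier by (metis add.commute sum.subset_diff)
  also have "sum f ?Z = ?z * c" using fZ by simp
  also have "sum f ?D = (?N - ?z) * a"
    using fD fin finZ grp_center_subset_carrier[of G] by (simp add: card_Diff_subset of_nat_diff card_mono)
  finally have S: "S = ?z * c + (?N - ?z) * a" .
  show False
  proof (cases "c = 0")
    case True
    then have "a = 0" unfolding a_def by simp
    then have "\<forall>u \<in> carrier G. f u = 0" using fZ fD True by blast
    with nonzero show False by blast
  next
    case False
    have "(?N - mu) * c = ?z * c + (?N - ?z) * (?z * c / (?z - mu))"
      using S lt unfolding c_def a_def by simp
    then have "(?N - mu) * c * (?z - mu) = ?z * c * (?z - mu) + (?N - ?z) * (?z * c)"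
      using muZ by (simp add: field_simps)
    then have "c * (mu * (mu - ?N)) = 0" by (simp add: algebra_simps)
    then show False using False mu0 lt by simp
  qed
qed

text \<open>The eigenfunction is the difference of the indicators of two distinct non-central
  elements of C(u); by (Con) every centralizer contains either both of them or neither.\<close>
lemma lap_eigenvalue_card_centr:
  assumes fin: "finite (carrier G)" and con: "con_condition G"
    and u: "u \<in> carrier G - grp_center G"
    and big: "card (grp_center G) + 2 \<le> card (centr G u)"
  shows "lap_eigenvalue G (real (card (centr G u)))"
proof -
  let ?Z = "grp_center G" and ?C = "centr G u"
  have finZ: "finite ?Z" using fin grp_center_subset_carrier finite_subset by metis
  have "Suc 1 \<le> card (?C - ?Z)"
    using big grp_center_subset_centr[of u G] u finZ by (simp add: card_Diff_subset)
  then obtain x B where "?C - ?Z = insert x B" "x \<notin> B" "B \<noteq> {}"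
    unfolding card_le_Suc_iff by fastforce
  then obtain y where xA: "x \<in> ?C - ?Z" and yA: "y \<in> ?C - ?Z" and xy: "x \<noteq> y" by blast
  have xD: "x \<in> carrier G - ?Z" and yD: "y \<in> carrier G - ?Z"
    using xA yA centr_subset_carrier[of G u] by auto
  have cx: "centr G x = ?C" and cy: "centr G y = ?C"
    using con_centr_eq[OF con u] xA yA xD yD by auto
  define f :: "'a \<Rightarrow> real" where "f v = (if v = x then 1 else 0) - (if v = y then 1 else 0)" for v
  have sum_f: "sum f A = (if x \<in> A then 1 else 0) - (if y \<in> A then 1 else 0)" if "finite A" for A
    unfolding f_def using that by (simp add: sum_subtractf)
  have "real (card (centr G v)) * f v - sum f (centr G v) = real (card ?C) * f v"
    if v: "v \<in> carrier G" for v
  proof (cases "v \<in> ?Z")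
    case True
    then show ?thesis
      using centr_of_central[OF True] sum_f[OF fin] xD yD unfolding f_def by auto
  next
    case False
    then have vD: "v \<in> carrier G - ?Z" using v by simp
    show ?thesis
    proof (cases "x \<in> centr G v \<or> y \<in> centr G v")
      case True
      then have "centr G v = ?C"
        using con_centr_eq[OF con vD xD] con_centr_eq[OF con vD yD] cx cy by auto
      then show ?thesis using sum_f[OF finite_centr[OF fin]] xA yA by simp
    next
      case False
      then have "v \<noteq> x" "v \<noteq> y" using self_in_centr[OF v] by auto
      then show ?thesis using sum_f[OF finite_centr[OF fin]] False unfolding f_def by simp
    qed
  qed
  moreover have "f x \<noteq> 0" using xy unfolding f_def by simp
  ultimately show ?thesis using lap_eigenvalue_iff[OF fin] xD by blast
qed

lemma Max_lap_eigenvalue_below_order: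
  assumes fin: "finite (carrier G)" and con: "con_condition G"
    and u0: "u0 \<in> carrier G - grp_center G"
    and max: "\<And>u. u \<in> carrier G - grp_center G \<Longrightarrow> card (centr G u) \<le> card (centr G u0)"
    and big: "card (grp_center G) + 2 \<le> card (centr G u0)"
  shows "Max {mu. lap_eigenvalue G mu \<and> mu < real (card (carrier G))} = card (centr G u0)"
    (is "Max ?E = _")
proof (rule Max_eqI)
  have E: "?E \<subseteq> {0, real (card (grp_center G))} \<union>
      (\<lambda>u. real (card (centr G u))) ` (carrier G - grp_center G)"
    using lap_eigenvalue_below_order_cases[OF fin con] by blast
  then show "finite ?E" by (rule finite_subset) (simp add: fin)
  show "mu \<le> card (centr G u0)" if "mu \<in> ?E" for mu
    using E that max card_centr_noncentral_ge[OF fin u0] by auto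
  have "card (centr G u0) < card (carrier G)"
    using centr_psubset_carrier[OF u0] fin psubset_card_mono by metis
  then show "real (card (centr G u0)) \<in> ?E"
    using lap_eigenvalue_card_centr[OF fin con u0 big] by simp
qed

theorem proposition3p1:
  fixes G :: "('a, 'b) monoid_scheme"
  assumes "group G" and "finite (carrier G)" and "\<not> comm_group G"
    and "con_condition G"
  shows "clique_number G = Max ((\<lambda>u. card (centr G u)) ` (carrier G - grp_center G))
    \<and> (grp_center G \<subset> CG_set G \<longrightarrow>
           real (clique_number G) = Max {mu. lap_eigenvalue G mu \<and> mu < real (card (carrier G))})
    \<and> (CG_set G = grp_center G \<longrightarrow> clique_number G = card (grp_center G) + 1)"
proof -
  note fin = assms(2) and con = assms(4)
  let ?Z = "grp_center G" and ?D = "carrier G - grp_center G" and ?c = "\<lambda>u. card (centr G u)"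
  have D: "?D \<noteq> {}" using noncentral_exists assms(1,3) .
  have omega: "clique_number G = Max (?c ` ?D)"
    using clique_number_eq_Max_card_centr[OF fin con D] .
  have "Max (?c ` ?D) \<in> ?c ` ?D" using fin D by (intro Max_in) auto
  then obtain u0 where u0: "u0 \<in> ?D" and max: "?c u0 = Max (?c ` ?D)" by auto
  have le_max: "?c u \<le> ?c u0" if "u \<in> ?D" for u using that max fin by simp
  have above_center: "card ?Z + 1 \<le> ?c u0" using card_centr_noncentral_ge[OF fin u0] .
  have "real (clique_number G) = Max {mu. lap_eigenvalue G mu \<and> mu < real (card (carrier G))}"
    if proper: "?Z \<subset> CG_set G"
  proof -
    obtain v where "v \<in> CG_set G" "v \<notin> ?Z" using proper by blast
    then have "card ?Z + 2 \<le> ?c u0" using le_max[of v] by (auto simp: CG_set_iff)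
    then show ?thesis
      using Max_lap_eigenvalue_below_order[OF fin con u0 le_max] omega max by simp
  qed
  moreover have "clique_number G = card ?Z + 1" if "CG_set G = ?Z"
  proof -
    have "u0 \<notin> CG_set G" using that u0 by blast
    then have "?c u0 \<le> card ?Z + 1" using u0 by (auto simp: CG_set_iff)
    then show ?thesis using above_center omega max by simp
  qed
  ultimately show ?thesis using omega by blast
qed

end
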